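(* Let $k$ be a field and $n\geq1$. Let $U=\{g(t_1)\cdots g(t_n): g(x)\in k[x],\ g(0)\neq0\}\subseteq k[s_1(t),\dots,s_n(t)]$ and $H_n=U^{-1}k[s_1(t),\dots,s_n(t)]$. Let $\psi\colon H_n\to A$ be a homomorphism of $k$-algebras, put $u_i=\psi(s_i(t))$ for $i=1,\dots,n$ and $F_n^\psi(x)=x^n-u_1x^{n-1}+\cdots+(-1)^nu_n\in A[x]$. Then the $A$-module $A\otimes_k k[x]_{(x)}/(F_n^\psi(x))$ is free of rank $n$ with a basis consisting of the classes of $1,x,\dots,x^{n-1}$. In particular, with $F_n(x)=x^n-s_1(t)x^{n-1}+\cdots+(-1)^ns_n(t)\in H_n[x]$, the $H_n$-module $H_n\otimes_k k[x]_{(x)}/(F_n(x))$ is free of rank $n$ with a basis consisting of the classes of $1,x,\dots,x^{n-1}$.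
   Context: $s_i(t)$ is the $i$-th elementary symmetric polynomial in the variables $t_1,\dots,t_n$ of the polynomial ring $k[t_1,\dots,t_n]$. $k[x]_{(x)}$ is the localization of $k[x]$ at the multiplicative set of polynomials $g(x)$ with $g(0)\neq0$; $A[x]=A\otimes_k k[x]$. *)

theory Defs
  imports "HOL-Library.Poly_Mapping" "HOL-Computational_Algebra.Polynomial"
begin

(* Multivariate polynomials k[t_0, t_1, ...] as finitely supported maps
  from monomials (nat =>0 nat) to coefficients. The variables t_1..t_n of the
  paper are t_0..t_(n-1) here. *)

type_synonym 'k mpoly = "(nat \<Rightarrow>\<^sub>0 nat) \<Rightarrow>\<^sub>0 'k"

definition mconst :: "'k::comm_ring_1 \<Rightarrow> 'k mpoly" where
  "mconst c = Poly_Mapping.single 0 c"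

definition mvar :: "nat \<Rightarrow> 'k::comm_ring_1 mpoly" where
  "mvar i = Poly_Mapping.single (Poly_Mapping.single i 1) 1"

definition esym :: "nat \<Rightarrow> nat \<Rightarrow> 'k::comm_ring_1 mpoly" where
  "esym n i = (\<Sum>S\<in>{S. S \<subseteq> {0..<n} \<and> card S = i}. \<Prod>j\<in>S. mvar j)"

inductive_set sym_subalg :: "nat \<Rightarrow> 'k::comm_ring_1 mpoly set" for n where
  const: "mconst c \<in> sym_subalg n"
| gen: "1 \<le> i \<Longrightarrow> i \<le> n \<Longrightarrow> esym n i \<in> sym_subalg n"
| add: "f \<in> sym_subalg n \<Longrightarrow> g \<in> sym_subalg n \<Longrightarrow> f + g \<in> sym_subalg n"
| mult: "f \<in> sym_subalg n \<Longrightarrow> g \<in> sym_subalg n \<Longrightarrow> f * g \<in> sym_subalg n"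

definition eval_at_var :: "'k::comm_ring_1 poly \<Rightarrow> nat \<Rightarrow> 'k mpoly" where
  "eval_at_var g i = poly (map_poly mconst g) (mvar i)"

definition Uset :: "nat \<Rightarrow> 'k::field mpoly set" where
  "Uset n = {\<Prod>i<n. eval_at_var g i | g. poly g 0 \<noteq> 0}"

(* k-algebra structure on A given by a ring homomorphism phi : k \<Rightarrow> A. *)
definition ring_hom_on :: "('k::comm_ring_1 \<Rightarrow> 'b::comm_ring_1) \<Rightarrow> bool" where
  "ring_hom_on phi \<longleftrightarrow> phi 1 = 1 \<and> (\<forall>x y. phi (x + y) = phi x + phi y) \<and>
      (\<forall>x y. phi (x * y) = phi x * phi y)"

definition kalg_hom_sym :: "nat \<Rightarrow> ('k::field \<Rightarrow> 'b::comm_ring_1) \<Rightarrow> ('k mpoly \<Rightarrow> 'b) \<Rightarrow> bool" where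
  "kalg_hom_sym n phi psi \<longleftrightarrow>
     (\<forall>c. psi (mconst c) = phi c) \<and>
     (\<forall>f\<in>sym_subalg n. \<forall>g\<in>sym_subalg n. psi (f + g) = psi f + psi g \<and> psi (f * g) = psi f * psi g)"

(* Image in A[x] of the multiplicative set {g \<in> k[x] : g(0) \<noteq> 0}; the
  localisation of A[x] at it is A \<otimes>_k k[x]_(x). *)
definition SA :: "('k::field \<Rightarrow> 'b::comm_ring_1) \<Rightarrow> 'b poly set" where
  "SA phi = {map_poly phi g | g. poly g 0 \<noteq> 0}"

(* Equality of the fractions p/g and q/h in the quotient  S^(-1) A[x] / (F). *)
definition loc_quot_eq :: "'b::comm_ring_1 poly set \<Rightarrow> 'b poly \<Rightarrow> 'b poly \<times> 'b poly \<Rightarrow> 'b poly \<times> 'b poly \<Rightarrow> bool" where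
  "loc_quot_eq S F pg qh \<longleftrightarrow> (case (pg, qh) of ((p, g), (q, h)) \<Rightarrow>
     (\<exists>r w s. w \<in> S \<and> s \<in> S \<and> s * ((p * h - q * g) * w - F * r * g * h) = 0))"

definition Fpsi :: "nat \<Rightarrow> ('k::field mpoly \<Rightarrow> 'b::comm_ring_1) \<Rightarrow> 'b poly" where
  "Fpsi n psi = monom 1 n + (\<Sum>i=1..n. monom ((-1)^i * psi (esym n i)) (n - i))"

end

theory Submission
  imports Defs "Jordan_Normal_Form.Determinant"
begin

(* Everything reduces to showing that every g in S = {g(x) : g(0) \<noteq> 0} becomes a unit modulo
  the monic polynomial F = F_n^psi: then p/g is congruent to p V with g V = 1 mod F, division by F
  reduces p V to a polynomial of degree < n, and a polynomial of degree < n that is a multiple of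
  F is zero.
  For the units, let C be the companion matrix of F, acting on A^n = A[x]/(F) as multiplication
  by x. Cramer's rule puts det g(C) into the ideal (g, F), so it suffices that det g(C) is a unit.
  Over the domain k[t] the universal companion matrix is conjugated by the Vandermonde matrix of
  t_1, ..., t_n to a diagonal matrix, hence det g(C_univ) = g(t_1) ... g(t_n) lies in U. The
  entries of g(C_univ) lie in k[s_1, ..., s_n], and psi carries its determinant to det g(C). *)

section \<open>Monic polynomials and units modulo them\<close>

definition monic_poly :: "(nat \<Rightarrow> 'a::comm_ring_1) \<Rightarrow> nat \<Rightarrow> 'a poly" where
  "monic_poly c n = monom 1 n + (\<Sum>j<n. monom (c j) j)"

definition unit_mod :: "'a::comm_ring_1 poly \<Rightarrow> 'a poly \<Rightarrow> bool" where
  "unit_mod F g \<longleftrightarrow> (\<exists>V Q. g * V = 1 + F * Q)"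

lemma coeff_monic_poly:
  "coeff (monic_poly c n) k = (if k = n then 1 else if k < n then c k else 0)"
  unfolding monic_poly_def by (simp add: coeff_sum coeff_monom)

lemma poly_monic_poly: "poly (monic_poly c n) x = x ^ n + (\<Sum>j<n. c j * x ^ j)"
  unfolding monic_poly_def by (simp add: poly_sum poly_monom)

lemma poly_eq_trivial_ring:
  assumes "(1::'a::comm_ring_1) = 0"
  shows "(p::'a poly) = q"
proof -
  have "(1::'a poly) = 0" using assms by (metis one_pCons pCons_0_0)
  then show ?thesis by (metis mult_1_left mult_zero_left)
qed

lemma monic_poly_nontrivial:
  assumes "(1::'a::comm_ring_1) \<noteq> 0"
  shows "degree (monic_poly c n :: 'a poly) = n" and "lead_coeff (monic_poly c n :: 'a poly) = 1"
proof -
  show "degree (monic_poly c n :: 'a poly) = n"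
    using assms by (intro antisym degree_le le_degree) (auto simp: coeff_monic_poly)
  then show "lead_coeff (monic_poly c n :: 'a poly) = 1" by (simp add: coeff_monic_poly)
qed

lemma monic_poly_division:
  fixes p :: "'a::comm_ring_1 poly"
  obtains d m where "p = monic_poly c n * d + m" and "\<forall>k\<ge>n. coeff m k = 0"
proof (cases "(1::'a) = 0")
  case True
  have "p = monic_poly c n * 0 + 0" by (rule poly_eq_trivial_ring[OF True])
  then show ?thesis by (rule that) simp
next
  case False
  let ?F = "monic_poly c n"
  obtain d m where dm: "pseudo_divmod p ?F = (d, m)" by (cases "pseudo_divmod p ?F") auto
  have F: "degree ?F = n" "lead_coeff ?F = 1"
    using monic_poly_nontrivial[OF False] by blast+
  then have "?F \<noteq> 0" using False by auto
  have "p = ?F * d + m" and "m = 0 \<or> degree m < n"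
    using pseudo_divmod[OF \<open>?F \<noteq> 0\<close> dm] F by auto
  then show ?thesis by (intro that) (auto intro: coeff_eq_0)
qed

lemma monic_poly_dvd_reduced_eq_0:
  fixes q :: "'a::comm_ring_1 poly"
  assumes dvd: "monic_poly c n dvd q" and reduced: "\<forall>k\<ge>n. coeff q k = 0"
  shows "q = 0"
proof (cases "(1::'a) = 0")
  case True
  then show ?thesis by (rule poly_eq_trivial_ring)
next
  case False
  let ?F = "monic_poly c n"
  from dvd obtain e where e: "q = ?F * e" by (elim dvdE)
  have "e = 0"
  proof (rule ccontr)
    assume "e \<noteq> 0"
    have "coeff q (degree ?F + degree e) = lead_coeff ?F * lead_coeff e"
      unfolding e by (rule coeff_mult_degree_sum)
    also have "\<dots> \<noteq> 0"
      using \<open>e \<noteq> 0\<close> monic_poly_nontrivial[OF False] by simp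
    finally show False using reduced monic_poly_nontrivial[OF False] by simp
  qed
  then show ?thesis using e by simp
qed

lemma unit_mod_mult: "unit_mod F a \<Longrightarrow> unit_mod F b \<Longrightarrow> unit_mod F (a * b)"
proof -
  assume "unit_mod F a" "unit_mod F b"
  then obtain Va Qa Vb Qb where "a * Va = 1 + F * Qa" "b * Vb = 1 + F * Qb"
    unfolding unit_mod_def by blast
  then have "(a * b) * (Va * Vb) = 1 + F * (Qa + Qb + F * Qa * Qb)"
    by (simp add: algebra_simps)
  then show ?thesis unfolding unit_mod_def by blast
qed

lemma unit_mod_dvd_mult_cancel:
  assumes "unit_mod F g" and "F dvd g * q"
  shows "F dvd q"
proof -
  obtain V Q where VQ: "g * V = 1 + F * Q" using assms(1) unfolding unit_mod_def by blast
  have "q = (g * q) * V - F * (Q * q)"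
    using arg_cong[OF VQ, of "\<lambda>x. x * q"] by (simp add: algebra_simps)
  then show ?thesis using assms(2) by (metis dvd_diff dvd_mult2 dvd_triv_left)
qed

lemma loc_quot_eq_reduce:
  assumes "1 \<in> S" and "g \<in> S" and "unit_mod (monic_poly c n) g"
  shows "\<exists>a. loc_quot_eq S (monic_poly c n) (p, g) (\<Sum>i<n. monom (a i) i, 1)"
proof -
  let ?F = "monic_poly c n"
  obtain V Q where VQ: "g * V = 1 + ?F * Q" using assms(3) unfolding unit_mod_def by blast
  obtain d m where dm: "p * V = ?F * d + m" and reduced: "\<forall>k\<ge>n. coeff m k = 0"
    by (rule monic_poly_division)
  have "p - m * g = ?F * (d * g - p * Q)"
  proof -
    have "p - m * g = p - (p * V - ?F * d) * g" using dm by simp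
    also have "\<dots> = p - p * (g * V) + ?F * d * g" by (simp add: algebra_simps)
    also have "\<dots> = ?F * (d * g - p * Q)" unfolding VQ by (simp add: algebra_simps)
    finally show ?thesis .
  qed
  then have "loc_quot_eq S ?F (p, g) (m, 1)"
    unfolding loc_quot_eq_def prod.case using assms(1,2)
    by (intro exI[of _ "d * g - p * Q"] exI[of _ g] exI[of _ 1]) simp
  moreover have "m = (\<Sum>i<n. monom (coeff m i) i)"
    using reduced by (intro poly_eqI) (auto simp: coeff_sum coeff_monom not_less)
  ultimately show ?thesis by (metis (no_types))
qed

lemma loc_quot_eq_zero_coeffs:
  assumes units: "\<forall>s\<in>S. unit_mod (monic_poly c n) s"
    and eq: "loc_quot_eq S (monic_poly c n) (\<Sum>i<n. monom (a i) i, 1) (0, 1)"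
    and i: "i < n"
  shows "a i = 0"
proof -
  let ?F = "monic_poly c n" and ?q = "\<Sum>i<n. monom (a i) i"
  obtain r w s where "w \<in> S" "s \<in> S" and "s * (?q * w - ?F * r) = 0"
    using eq unfolding loc_quot_eq_def by auto
  then have "?F dvd (s * w) * ?q" and "unit_mod ?F (s * w)"
    using units by (auto simp: algebra_simps unit_mod_mult intro: dvdI[of _ _ "s * r"])
  then have "?F dvd ?q" by (rule unit_mod_dvd_mult_cancel[rotated])
  moreover have "\<forall>k\<ge>n. coeff ?q k = 0" by (simp add: coeff_sum coeff_monom)
  ultimately have "?q = 0" by (rule monic_poly_dvd_reduced_eq_0)
  moreover have "coeff ?q i = a i" using i by (simp add: coeff_sum coeff_monom)
  ultimately show ?thesis by simp
qed

section \<open>Companion matrices\<close>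

definition companion_mat :: "(nat \<Rightarrow> 'a::comm_ring_1) \<Rightarrow> nat \<Rightarrow> 'a mat" where
  "companion_mat c n =
     mat n n (\<lambda>(i, j). (if i = Suc j then 1 else 0) - (if j = n - 1 then c i else 0))"

definition poly_of_vec :: "'a::comm_ring_1 vec \<Rightarrow> 'a poly" where
  "poly_of_vec v = (\<Sum>j<dim_vec v. monom (v $ j) j)"

primrec horner_mat :: "nat \<Rightarrow> 'a::comm_ring_1 mat \<Rightarrow> 'a list \<Rightarrow> 'a mat" where
  "horner_mat n C [] = 0\<^sub>m n n"
| "horner_mat n C (a # as) = a \<cdot>\<^sub>m 1\<^sub>m n + C * horner_mat n C as"

lemma coeff_poly_of_vec: "coeff (poly_of_vec v) k = (if k < dim_vec v then v $ k else 0)"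
  unfolding poly_of_vec_def by (simp add: coeff_sum coeff_monom)

lemma companion_mat_carrier [simp]: "companion_mat c n \<in> carrier_mat n n"
  unfolding companion_mat_def by simp

lemma companion_mat_dim [simp]:
  "dim_row (companion_mat c n) = n" "dim_col (companion_mat c n) = n"
  unfolding companion_mat_def by simp_all

lemma horner_mat_carrier [simp]: "C \<in> carrier_mat n n \<Longrightarrow> horner_mat n C cs \<in> carrier_mat n n"
  by (induction cs) auto

lemma horner_mat_dim [simp]:
  assumes "C \<in> carrier_mat n n"
  shows "dim_row (horner_mat n C cs) = n" "dim_col (horner_mat n C cs) = n"
  using horner_mat_carrier[OF assms] by auto

lemma poly_of_vec_add:
  "v \<in> carrier_vec n \<Longrightarrow> w \<in> carrier_vec n \<Longrightarrow> poly_of_vec (v + w) = poly_of_vec v + poly_of_vec w"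
  by (rule poly_eqI) (simp add: coeff_poly_of_vec)

lemma poly_of_vec_smult: "poly_of_vec (a \<cdot>\<^sub>v v) = Polynomial.smult a (poly_of_vec v)"
  by (rule poly_eqI) (simp add: coeff_poly_of_vec)

lemma poly_of_vec_companion_mat_mult:
  assumes v: "v \<in> carrier_vec n" and n: "n \<ge> 1"
  shows "poly_of_vec (companion_mat c n *\<^sub>v v) =
    pCons 0 (poly_of_vec v) - Polynomial.smult (v $ (n - 1)) (monic_poly c n)"
proof (rule poly_eqI)
  fix k
  show "coeff (poly_of_vec (companion_mat c n *\<^sub>v v)) k =
    coeff (pCons 0 (poly_of_vec v) - Polynomial.smult (v $ (n - 1)) (monic_poly c n)) k"
  proof (cases "k < n")
    case True
    have "(companion_mat c n *\<^sub>v v) $ k =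
        (\<Sum>j<n. (if k = Suc j then v $ j else 0) - (if j = n - 1 then c k * v $ j else 0))"
      using True v unfolding companion_mat_def
      by (auto simp: scalar_prod_def lessThan_atLeast0 algebra_simps intro!: sum.cong)
    also have "\<dots> = (if k = 0 then 0 else v $ (k - 1)) - c k * v $ (n - 1)"
      using True n by (cases k) (auto simp: sum_subtractf sum_negf sum.delta')
    finally show ?thesis using True v n
      by (cases k) (auto simp: coeff_poly_of_vec coeff_monic_poly coeff_pCons mult.commute)
  next
    case False
    then show ?thesis using v n
      by (auto simp: coeff_poly_of_vec coeff_monic_poly coeff_pCons split: nat.split)
  qed
qed

lemma poly_of_vec_horner_mat_mult:
  assumes v: "v \<in> carrier_vec n" and n: "n \<ge> 1"
  shows "\<exists>q. poly_of_vec (horner_mat n (companion_mat c n) cs *\<^sub>v v) =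
    Poly cs * poly_of_vec v + monic_poly c n * q"
proof (induction cs)
  case Nil
  have "poly_of_vec (0\<^sub>m n n *\<^sub>v v) = 0" using v by (intro poly_eqI) (simp add: coeff_poly_of_vec)
  then show ?case by (intro exI[of _ 0]) simp
next
  case (Cons a as)
  let ?C = "companion_mat c n" and ?F = "monic_poly c n"
  let ?w = "horner_mat n ?C as *\<^sub>v v"
  from Cons obtain q where q: "poly_of_vec ?w = Poly as * poly_of_vec v + ?F * q" by blast
  have w: "?w \<in> carrier_vec n"
    by (rule mult_mat_vec_carrier[OF horner_mat_carrier[OF companion_mat_carrier] v])
  have M: "horner_mat n ?C as \<in> carrier_mat n n" by simp
  have "horner_mat n ?C (a # as) *\<^sub>v v = (a \<cdot>\<^sub>m 1\<^sub>m n) *\<^sub>v v + (?C * horner_mat n ?C as) *\<^sub>v v"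
    using M v by (simp, subst add_mult_distrib_mat_vec[of _ n n])
      (auto intro: mult_carrier_mat[of _ n n])
  also have "\<dots> = a \<cdot>\<^sub>v v + ?C *\<^sub>v ?w"
    using M v by (auto simp: assoc_mult_mat_vec[of _ n n _ n v] intro!: eq_vecI)
  finally have "horner_mat n ?C (a # as) *\<^sub>v v = a \<cdot>\<^sub>v v + ?C *\<^sub>v ?w" .
  then have "poly_of_vec (horner_mat n ?C (a # as) *\<^sub>v v) =
      poly_of_vec (a \<cdot>\<^sub>v v) + poly_of_vec (?C *\<^sub>v ?w)"
    using v w by (simp add: poly_of_vec_add[of _ n] mult_mat_vec_carrier[of _ n n])
  also have "\<dots> = Polynomial.smult a (poly_of_vec v) + pCons 0 (poly_of_vec ?w) -
      Polynomial.smult (?w $ (n - 1)) ?F"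
    using w n by (simp add: poly_of_vec_smult poly_of_vec_companion_mat_mult)
  also have "\<dots> = Poly (a # as) * poly_of_vec v + ?F * (pCons 0 q - [:?w $ (n - 1):])"
    unfolding q by (simp add: algebra_simps)
  finally show ?case by blast
qed

(* Cramer's rule: g(C) (adj g(C) e_0) = det g(C) e_0; read both sides as polynomials. *)
lemma det_horner_mat_mem_ideal:
  assumes n: "n \<ge> 1"
  shows "\<exists>V Q. Poly cs * V = [:det (horner_mat n (companion_mat c n) cs):] + monic_poly c n * Q"
proof -
  let ?M = "horner_mat n (companion_mat c n) cs"
  have M: "?M \<in> carrier_mat n n" by simp
  define w where "w = adj_mat ?M *\<^sub>v unit_vec n 0"
  have w: "w \<in> carrier_vec n" unfolding w_def using adj_mat(1)[OF M] by simp
  have "?M *\<^sub>v w = (?M * adj_mat ?M) *\<^sub>v unit_vec n 0"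
    unfolding w_def using M adj_mat(1)[OF M] by (simp add: assoc_mult_mat_vec[of _ n n _ n])
  also have "\<dots> = det ?M \<cdot>\<^sub>v unit_vec n 0"
    using adj_mat(2)[OF M] by (auto intro!: eq_vecI)
  finally have "poly_of_vec (?M *\<^sub>v w) = [:det ?M:]"
    using n by (auto intro!: poly_eqI simp: coeff_poly_of_vec coeff_pCons split: nat.split)
  moreover obtain q where "poly_of_vec (?M *\<^sub>v w) = Poly cs * poly_of_vec w + monic_poly c n * q"
    using poly_of_vec_horner_mat_mult[OF w n] by blast
  ultimately have "Poly cs * poly_of_vec w = [:det ?M:] + monic_poly c n * (- q)"
    by (simp add: eq_diff_eq)
  then show ?thesis by blast
qed

lemma unit_mod_if_det_horner_mat_unit:
  assumes "n \<ge> 1" and "det (horner_mat n (companion_mat c n) cs) dvd 1"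
  shows "unit_mod (monic_poly c n) (Poly cs)"
proof -
  let ?d = "det (horner_mat n (companion_mat c n) cs)"
  obtain V Q where VQ: "Poly cs * V = [:?d:] + monic_poly c n * Q"
    using det_horner_mat_mem_ideal[OF assms(1)] by blast
  obtain e where e: "1 = ?d * e" using assms(2) by (elim dvdE)
  have "Poly cs * Polynomial.smult e V = Polynomial.smult e ([:?d:] + monic_poly c n * Q)"
    by (simp flip: VQ)
  also have "\<dots> = 1 + monic_poly c n * Polynomial.smult e Q"
    using e by (simp add: smult_add_right mult.commute)
  finally show ?thesis unfolding unit_mod_def by blast
qed

lemma powers_row_companion_mat:
  assumes root: "poly (monic_poly c n) t = 0" and l: "l < n"
  shows "(\<Sum>k<n. t ^ k * companion_mat c n $$ (k, l)) = t ^ Suc l"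
proof -
  have "(\<Sum>k<n. t ^ k * companion_mat c n $$ (k, l)) =
      (\<Sum>k<n. (if k = Suc l then t ^ k else 0) - (if l = n - 1 then c k * t ^ k else 0))"
    using l by (intro sum.cong) (auto simp: companion_mat_def algebra_simps)
  also have "\<dots> = t ^ Suc l"
  proof (cases "l = n - 1")
    case True
    then have "(\<Sum>k<n. c k * t ^ k) = - (t ^ Suc l)"
      using root l by (simp add: poly_monic_poly eq_neg_iff_add_eq_0 add.commute)
    then show ?thesis using True l by (simp add: sum_subtractf sum_negf)
  next
    case False
    then show ?thesis using l by (simp add: sum.delta')
  qed
  finally show ?thesis .
qed

lemma powers_row_horner_mat:
  assumes root: "poly (monic_poly c n) t = 0" and j: "j < n"
  shows "(\<Sum>k<n. t ^ k * horner_mat n (companion_mat c n) cs $$ (k, j)) = poly (Poly cs) t * t ^ j"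
  using j
proof (induction cs arbitrary: j)
  case Nil
  then show ?case by simp
next
  case (Cons a as)
  let ?C = "companion_mat c n" and ?M = "horner_mat n (companion_mat c n) as"
  have entry: "horner_mat n ?C (a # as) $$ (k, j) =
      (if k = j then a else 0) + (\<Sum>l<n. ?C $$ (k, l) * ?M $$ (l, j))" if "k < n" for k
    using that Cons.prems by (simp add: scalar_prod_def lessThan_atLeast0)
  have "(\<Sum>k<n. t ^ k * horner_mat n ?C (a # as) $$ (k, j)) =
      (\<Sum>k<n. (if k = j then a * t ^ k else 0) + (\<Sum>l<n. t ^ k * ?C $$ (k, l) * ?M $$ (l, j)))"
    using entry by (intro sum.cong) (auto simp: distrib_left sum_distrib_left ac_simps)
  also have "\<dots> = (\<Sum>k<n. (if k = j then a * t ^ k else 0)) +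
      (\<Sum>k<n. \<Sum>l<n. t ^ k * ?C $$ (k, l) * ?M $$ (l, j))"
    by (rule sum.distrib)
  also have "(\<Sum>k<n. \<Sum>l<n. t ^ k * ?C $$ (k, l) * ?M $$ (l, j)) =
      (\<Sum>l<n. (\<Sum>k<n. t ^ k * ?C $$ (k, l)) * ?M $$ (l, j))"
    by (subst sum.swap) (simp add: sum_distrib_right)
  also have "\<dots> = t * (\<Sum>l<n. t ^ l * ?M $$ (l, j))"
    by (auto simp: powers_row_companion_mat[OF root] sum_distrib_left intro!: sum.cong)
  finally show ?case
    using Cons by (simp add: sum.delta' algebra_simps)
qed

lemma det_vandermonde_neq_0:
  fixes t :: "nat \<Rightarrow> 'a::idom"
  assumes inj: "inj_on t {..<n}"
  shows "det (mat n n (\<lambda>(i, j). t i ^ j)) \<noteq> 0"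
proof
  let ?P = "mat n n (\<lambda>(i, j). t i ^ j)"
  assume "det ?P = 0"
  then obtain v where v: "v \<in> carrier_vec n" "v \<noteq> 0\<^sub>v n" "?P *\<^sub>v v = 0\<^sub>v n"
    using det_0_iff_vec_prod_zero[of ?P n] by auto
  have nonzero: "poly_of_vec v \<noteq> 0"
  proof
    assume "poly_of_vec v = 0"
    then have "v $ j = 0" if "j < n" for j
      using coeff_poly_of_vec[of v j] that v(1) by simp
    then show False using v(1,2) by (auto intro: eq_vecI)
  qed
  have "t ` {..<n} \<subseteq> {x. poly (poly_of_vec v) x = 0}"
  proof
    fix x assume "x \<in> t ` {..<n}"
    then obtain i where i: "i < n" "x = t i" by auto
    have "poly (poly_of_vec v) (t i) = (?P *\<^sub>v v) $ i"
      using i v(1) by (simp add: poly_of_vec_def poly_sum poly_monom scalar_prod_def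
          lessThan_atLeast0 mult.commute)
    then show "x \<in> {x. poly (poly_of_vec v) x = 0}" using i v(3) by simp
  qed
  then have "card (t ` {..<n}) \<le> card {x. poly (poly_of_vec v) x = 0}"
    using nonzero by (intro card_mono poly_roots_finite)
  also have "\<dots> \<le> degree (poly_of_vec v)"
    using nonzero by (rule card_poly_roots_bound)
  finally have "n \<le> degree (poly_of_vec v)" using card_image[OF inj] by simp
  moreover have "degree (poly_of_vec v) < n"
  proof (rule ccontr)
    assume "\<not> degree (poly_of_vec v) < n"
    then have "lead_coeff (poly_of_vec v) = 0" using v(1) by (simp add: coeff_poly_of_vec)
    then show False using nonzero by simp
  qed
  ultimately show False by simp
qed

lemma det_horner_companion_mat:
  fixes t :: "nat \<Rightarrow> 'a::idom"
  assumes roots: "\<And>i. i < n \<Longrightarrow> poly (monic_poly c n) (t i) = 0" and inj: "inj_on t {..<n}"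
  shows "det (horner_mat n (companion_mat c n) cs) = (\<Prod>i<n. poly (Poly cs) (t i))"
proof -
  let ?M = "horner_mat n (companion_mat c n) cs"
  define P where "P = mat n n (\<lambda>(i, j). t i ^ j)"
  define D where "D = mat n n (\<lambda>(i, j). if i = j then poly (Poly cs) (t i) else 0)"
  have M: "?M \<in> carrier_mat n n" and P: "P \<in> carrier_mat n n" and D: "D \<in> carrier_mat n n"
    unfolding P_def D_def by simp_all
  have "P * ?M = D * P" \<comment> \<open>row i of P is a left eigenvector of C for the eigenvalue t i\<close>
  proof (rule eq_matI)
    fix i j assume "i < dim_row (D * P)" "j < dim_col (D * P)"
    then have i: "i < n" and j: "j < n" using D P by auto
    have "(P * ?M) $$ (i, j) = (\<Sum>k<n. t i ^ k * ?M $$ (k, j))"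
      using i j M unfolding P_def by (simp add: scalar_prod_def lessThan_atLeast0)
    also have "\<dots> = poly (Poly cs) (t i) * t i ^ j"
      using powers_row_horner_mat[OF roots[OF i] j] .
    also have "\<dots> = (\<Sum>k\<in>{0..<n}. if i = k then poly (Poly cs) (t i) * t i ^ j else 0)"
      using i by simp
    also have "\<dots> = (\<Sum>k\<in>{0..<n}. (if i = k then poly (Poly cs) (t i) else 0) * t k ^ j)"
      by (rule sum.cong) auto
    also have "\<dots> = (D * P) $$ (i, j)"
      using i j unfolding D_def P_def by (simp add: scalar_prod_def)
    finally show "(P * ?M) $$ (i, j) = (D * P) $$ (i, j)" .
  qed (use D P M in auto)
  then have "det P * det ?M = det P * det D"
    using det_mult[OF P M] det_mult[OF D P] by (metis mult.commute)
  moreover have "det P \<noteq> 0" unfolding P_def by (rule det_vandermonde_neq_0[OF inj])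
  moreover have "det D = (\<Prod>i<n. poly (Poly cs) (t i))"
  proof -
    have "upper_triangular D" unfolding D_def upper_triangular_def by auto
    then have "det D = prod_list (diag_mat D)" by (rule det_upper_triangular[OF _ D])
    then show ?thesis unfolding prod_list_diag_prod by (simp add: D_def lessThan_atLeast0)
  qed
  ultimately show ?thesis by simp
qed

section \<open>Ring homomorphisms defined on a subring\<close>

lemma elements_mat_subset_iff:
  "elements_mat X \<subseteq> S \<longleftrightarrow> (\<forall>i<dim_row X. \<forall>j<dim_col X. X $$ (i, j) \<in> S)"
proof
  have "X \<in> carrier_mat (dim_row X) (dim_col X)" by simp
  then show "elements_mat X \<subseteq> S \<Longrightarrow> \<forall>i<dim_row X. \<forall>j<dim_col X. X $$ (i, j) \<in> S"
    by (blast intro: elements_matI)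
  show "\<forall>i<dim_row X. \<forall>j<dim_col X. X $$ (i, j) \<in> S \<Longrightarrow> elements_mat X \<subseteq> S"
    by (blast dest: elements_matD)
qed

locale subring =
  fixes S :: "'a::comm_ring_1 set"
  assumes one_mem: "1 \<in> S"
    and add_mem: "x \<in> S \<Longrightarrow> y \<in> S \<Longrightarrow> x + y \<in> S"
    and mult_mem: "x \<in> S \<Longrightarrow> y \<in> S \<Longrightarrow> x * y \<in> S"
    and uminus_mem: "x \<in> S \<Longrightarrow> - x \<in> S"
begin

lemma zero_mem: "0 \<in> S"
  using add_mem[OF one_mem uminus_mem[OF one_mem]] by simp

lemma diff_mem: "x \<in> S \<Longrightarrow> y \<in> S \<Longrightarrow> x - y \<in> S"
  using add_mem[OF _ uminus_mem] by simp

lemma sum_mem: "(\<And>x. x \<in> A \<Longrightarrow> f x \<in> S) \<Longrightarrow> sum f A \<in> S"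
  by (induction A rule: infinite_finite_induct) (auto intro: zero_mem add_mem)

lemma prod_mem: "(\<And>x. x \<in> A \<Longrightarrow> f x \<in> S) \<Longrightarrow> prod f A \<in> S"
  by (induction A rule: infinite_finite_induct) (auto intro: one_mem mult_mem)

lemma power_mem: "x \<in> S \<Longrightarrow> x ^ k \<in> S"
  by (induction k) (auto intro: one_mem mult_mem)

lemma signof_mem: "signof p \<in> S"
  by (cases p rule: sign_cases) (simp_all add: one_mem uminus_mem)

lemma mult_mat_mem:
  assumes "X \<in> carrier_mat m k" "Y \<in> carrier_mat k l" "elements_mat X \<subseteq> S" "elements_mat Y \<subseteq> S"
  shows "elements_mat (X * Y) \<subseteq> S"
  using assms by (auto simp: elements_mat_subset_iff scalar_prod_def intro!: sum_mem mult_mem)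

lemma horner_mat_mem:
  assumes C: "C \<in> carrier_mat n n" "elements_mat C \<subseteq> S" and cs: "set cs \<subseteq> S"
  shows "elements_mat (horner_mat n C cs) \<subseteq> S"
  using cs
proof (induction cs)
  case Nil
  then show ?case using zero_mem by (auto simp: elements_mat_subset_iff)
next
  case (Cons a as)
  then have "elements_mat (horner_mat n C as) \<subseteq> S" by simp
  then have "elements_mat (C * horner_mat n C as) \<subseteq> S"
    using C by (intro mult_mat_mem[of _ n n _ n]) auto
  then show ?case
    using Cons.prems C
    by (auto simp: elements_mat_subset_iff intro!: add_mem mult_mem one_mem zero_mem)
qed

lemma companion_mat_mem:
  assumes "\<And>j. j < n \<Longrightarrow> c j \<in> S"
  shows "elements_mat (companion_mat c n) \<subseteq> S"
  using assms by (auto simp: elements_mat_subset_iff companion_mat_def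
      intro!: diff_mem uminus_mem one_mem zero_mem)

end

(* Needed because psi is a homomorphism on k[s_1, ..., s_n] only, not on all of k[t]. *)
locale subring_hom = subring S for S :: "'a::comm_ring_1 set" +
  fixes h :: "'a \<Rightarrow> 'b::comm_ring_1"
  assumes hom_one: "h 1 = 1"
    and hom_add: "x \<in> S \<Longrightarrow> y \<in> S \<Longrightarrow> h (x + y) = h x + h y"
    and hom_mult: "x \<in> S \<Longrightarrow> y \<in> S \<Longrightarrow> h (x * y) = h x * h y"
begin

lemma hom_zero: "h 0 = 0"
  using hom_add[OF zero_mem zero_mem] by simp

lemma hom_uminus:
  assumes "x \<in> S"
  shows "h (- x) = - h x"
proof -
  have "h x + h (- x) = h (x + - x)" using hom_add[OF assms uminus_mem[OF assms]] by (rule sym)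
  then have "h x + h (- x) = 0" by (simp add: hom_zero)
  then show ?thesis by (simp add: add.inverse_unique)
qed

lemma hom_diff: "x \<in> S \<Longrightarrow> y \<in> S \<Longrightarrow> h (x - y) = h x - h y"
  using hom_add[OF _ uminus_mem] hom_uminus by simp

lemma hom_sum: "(\<And>x. x \<in> A \<Longrightarrow> f x \<in> S) \<Longrightarrow> h (sum f A) = (\<Sum>x\<in>A. h (f x))"
  by (induction A rule: infinite_finite_induct) (auto simp: hom_zero hom_add sum_mem)

lemma hom_prod: "(\<And>x. x \<in> A \<Longrightarrow> f x \<in> S) \<Longrightarrow> h (prod f A) = (\<Prod>x\<in>A. h (f x))"
  by (induction A rule: infinite_finite_induct) (auto simp: hom_one hom_mult prod_mem)

lemma hom_power: "x \<in> S \<Longrightarrow> h (x ^ k) = h x ^ k"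
  by (induction k) (auto simp: hom_one hom_mult power_mem)

lemma hom_signof: "h (signof p) = signof p"
  by (cases p rule: sign_cases) (simp_all add: one_mem hom_one hom_uminus)

lemma hom_det:
  assumes X: "X \<in> carrier_mat m m" and XS: "elements_mat X \<subseteq> S"
  shows "h (det X) = det (map_mat h X)"
proof -
  have entry: "X $$ (i, p i) \<in> S" if "p permutes {0..<m}" "i \<in> {0..<m}" for p i
    using XS X that by (auto simp: elements_mat_subset_iff permutes_in_image)
  have "h (det X) = (\<Sum>p | p permutes {0..<m}. h (signof p * (\<Prod>i = 0..<m. X $$ (i, p i))))"
    unfolding det_def'[OF X] by (intro hom_sum mult_mem signof_mem prod_mem entry) auto
  also have "\<dots> = (\<Sum>p | p permutes {0..<m}. signof p * (\<Prod>i = 0..<m. h (X $$ (i, p i))))"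
  proof (intro sum.cong refl)
    fix p assume "p \<in> {p. p permutes {0..<m}}"
    then have p_entry: "\<And>i. i \<in> {0..<m} \<Longrightarrow> X $$ (i, p i) \<in> S" using entry by blast
    have "h (signof p * (\<Prod>i = 0..<m. X $$ (i, p i))) =
        h (signof p) * h (\<Prod>i = 0..<m. X $$ (i, p i))"
      by (rule hom_mult[OF signof_mem prod_mem[OF p_entry]])
    also have "h (\<Prod>i = 0..<m. X $$ (i, p i)) = (\<Prod>i = 0..<m. h (X $$ (i, p i)))"
      by (rule hom_prod[OF p_entry])
    finally show "h (signof p * (\<Prod>i = 0..<m. X $$ (i, p i))) =
        signof p * (\<Prod>i = 0..<m. h (X $$ (i, p i)))"
      by (simp only: hom_signof)
  qed
  also have "\<dots> = det (map_mat h X)"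
    using X unfolding det_def'[of "map_mat h X" m, simplified, OF X]
    by (intro sum.cong refl arg_cong2[where f="(*)"] prod.cong)
  finally show ?thesis .
qed

lemma map_mat_mult:
  assumes X: "X \<in> carrier_mat m k" and Y: "Y \<in> carrier_mat k l"
    and XS: "elements_mat X \<subseteq> S" and YS: "elements_mat Y \<subseteq> S"
  shows "map_mat h (X * Y) = map_mat h X * map_mat h Y"
proof (rule eq_matI)
  fix i j assume "i < dim_row (map_mat h X * map_mat h Y)" "j < dim_col (map_mat h X * map_mat h Y)"
  then have i: "i < m" and j: "j < l" using X Y by auto
  have entries: "X $$ (i, r) \<in> S" "Y $$ (r, j) \<in> S" if "r < k" for r
    using XS YS X Y i j that by (auto simp: elements_mat_subset_iff)
  have "map_mat h (X * Y) $$ (i, j) = h (\<Sum>r = 0..<k. X $$ (i, r) * Y $$ (r, j))"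
    using X Y i j by (simp add: scalar_prod_def)
  also have "\<dots> = (\<Sum>r = 0..<k. h (X $$ (i, r) * Y $$ (r, j)))"
    by (rule hom_sum) (simp add: entries mult_mem)
  also have "\<dots> = (map_mat h X * map_mat h Y) $$ (i, j)"
    using X Y i j by (simp add: scalar_prod_def entries hom_mult)
  finally show "map_mat h (X * Y) $$ (i, j) = (map_mat h X * map_mat h Y) $$ (i, j)" .
qed (use X Y in auto)

lemma map_mat_horner_mat:
  assumes C: "C \<in> carrier_mat n n" "elements_mat C \<subseteq> S" and cs: "set cs \<subseteq> S"
  shows "map_mat h (horner_mat n C cs) = horner_mat n (map_mat h C) (map h cs)"
  using cs
proof (induction cs)
  case Nil
  then show ?case by (auto simp: hom_zero)
next
  case (Cons a as)
  have M: "horner_mat n C as \<in> carrier_mat n n" "elements_mat (horner_mat n C as) \<subseteq> S"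
    using C Cons.prems by (simp, intro horner_mat_mem) auto
  have CM: "elements_mat (C * horner_mat n C as) \<subseteq> S"
    using C M by (intro mult_mat_mem[of _ n n _ n]) auto
  have CM_map:
    "map_mat h (C * horner_mat n C as) = map_mat h C * horner_mat n (map_mat h C) (map h as)"
    using C M Cons by (simp add: map_mat_mult[of _ n n _ n])
  show ?case
  proof (rule eq_matI)
    fix i j assume "i < dim_row (horner_mat n (map_mat h C) (map h (a # as)))"
      and "j < dim_col (horner_mat n (map_mat h C) (map h (a # as)))"
    then have i: "i < n" and j: "j < n" using C by auto
    have delta: "(if i = j then 1 else 0) \<in> S" and CM_ij: "(C * horner_mat n C as) $$ (i, j) \<in> S"
      using CM C M i j by (auto simp: one_mem zero_mem elements_mat_subset_iff)
    have "map_mat h (horner_mat n C (a # as)) $$ (i, j) =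
        h (a * (if i = j then 1 else 0) + (C * horner_mat n C as) $$ (i, j))"
      using C M i j by simp
    also have "\<dots> = h a * (if i = j then 1 else 0) + map_mat h (C * horner_mat n C as) $$ (i, j)"
      using Cons.prems C M i j delta CM_ij
      by (simp add: hom_add mult_mem hom_mult hom_one hom_zero del: mult_1_right mult_zero_right)
    also have "\<dots> = horner_mat n (map_mat h C) (map h (a # as)) $$ (i, j)"
      using C M i j unfolding CM_map by simp
    finally show "map_mat h (horner_mat n C (a # as)) $$ (i, j) =
        horner_mat n (map_mat h C) (map h (a # as)) $$ (i, j)" .
  qed (use C in auto)
qed

lemma map_mat_companion_mat:
  assumes c: "\<And>j. j < n \<Longrightarrow> c j \<in> S"
  shows "map_mat h (companion_mat c n) = companion_mat (\<lambda>j. h (c j)) n"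
proof -
  have "h ((if i = Suc j then 1 else 0) - (if j = n - 1 then c i else 0)) =
      (if i = Suc j then 1 else 0) - (if j = n - 1 then h (c i) else 0)"
    if "i < n" for i j
    using c[OF that]
    by (cases "i = Suc j"; cases "j = n - 1")
      (simp_all add: hom_diff hom_uminus hom_one hom_zero one_mem zero_mem uminus_mem)
  then show ?thesis by (auto simp: companion_mat_def intro!: eq_matI)
qed

end

section \<open>The universal monic polynomial\<close>

lemma mconst_1 [simp]: "mconst 1 = 1"
  unfolding mconst_def by simp

lemma mconst_uminus: "mconst (- a) = - mconst a"
  unfolding mconst_def by (simp add: single_uminus)

lemma esym_0: "esym n 0 = 1"
proof -
  have "{S. S \<subseteq> {0..<n} \<and> card S = 0} = {{}}"
    by (auto dest: finite_subset)
  then show ?thesis unfolding esym_def by simp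
qed

(* the coefficient of x^j in (x - t_0) ... (x - t_(n-1)) *)
definition univ_coeff :: "nat \<Rightarrow> nat \<Rightarrow> 'k::comm_ring_1 mpoly" where
  "univ_coeff n j = (-1) ^ (n - j) * esym n (n - j)"

lemma poly_monic_poly_univ_coeff_mvar:
  assumes i: "i < n"
  shows "poly (monic_poly (univ_coeff n) n) (mvar i :: 'k::comm_ring_1 mpoly) = 0"
proof -
  let ?x = "mvar i :: 'k mpoly" and ?U = "{0..<n}"
  have "0 = (\<Prod>j\<in>?U. - mvar j + ?x)"
    using i by (intro prod_zero[symmetric]) auto
  also have "\<dots> = (\<Sum>T\<in>Pow ?U. (\<Prod>j\<in>T. - mvar j) * (\<Prod>j\<in>?U - T. ?x))"
    by (rule prod_add) simp
  also have "\<dots> = (\<Sum>T\<in>Pow ?U. (-1) ^ card T * ?x ^ (n - card T) * (\<Prod>j\<in>T. mvar j))"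
  proof (rule sum.cong[OF refl])
    fix T assume T: "T \<in> Pow ?U"
    then have "card (?U - T) = n - card T"
      by (subst card_Diff_subset) (auto dest: finite_subset)
    then show "(\<Prod>j\<in>T. - mvar j) * (\<Prod>j\<in>?U - T. ?x) =
        (-1) ^ card T * ?x ^ (n - card T) * (\<Prod>j\<in>T. mvar j)"
      by (simp add: prod_uminus)
  qed
  also have "\<dots> = (\<Sum>k = 0..n. \<Sum>T | T \<in> Pow ?U \<and> card T = k.
      (-1) ^ card T * ?x ^ (n - card T) * (\<Prod>j\<in>T. mvar j))"
    by (rule sum.group[symmetric]) (auto simp: card_mono[of ?U, simplified])
  also have "\<dots> = (\<Sum>k = 0..n. (-1) ^ k * ?x ^ (n - k) * esym n k)"
    unfolding esym_def by (intro sum.cong refl) (simp add: sum_distrib_left Pow_def conj_commute)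
  also have "\<dots> = ?x ^ n + (\<Sum>k = 1..n. (-1) ^ k * ?x ^ (n - k) * esym n k)"
    by (subst sum.atLeast_Suc_atMost) (simp_all add: esym_0)
  also have "(\<Sum>k = 1..n. (-1) ^ k * ?x ^ (n - k) * esym n k) = (\<Sum>j<n. univ_coeff n j * ?x ^ j)"
    unfolding univ_coeff_def
    by (rule sum.reindex_bij_witness[where i="\<lambda>j. n - j" and j="\<lambda>k. n - k"]) (auto simp: ac_simps)
  finally show ?thesis by (simp add: poly_monic_poly)
qed

lemma inj_mvar: "inj (mvar :: nat \<Rightarrow> 'k::comm_ring_1 mpoly)"
proof (rule injI)
  fix i j assume "(mvar i :: 'k mpoly) = mvar j"
  then have "Poly_Mapping.keys (mvar i :: 'k mpoly) = Poly_Mapping.keys (mvar j :: 'k mpoly)"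
    by simp
  then have "Poly_Mapping.single i (1::nat) = Poly_Mapping.single j 1"
    unfolding mvar_def by simp
  then show "i = j" by (metis Poly_Mapping.keys_single singleton_inject one_neq_zero)
qed

lemma subring_sym_subalg: "subring (sym_subalg n)"
proof
  show "1 \<in> sym_subalg n" using sym_subalg.const[of 1 n] by simp
  show "- f \<in> sym_subalg n" if "f \<in> sym_subalg n" for f
    using sym_subalg.mult[OF sym_subalg.const[of "-1" n] that] by (simp add: mconst_uminus)
qed (auto intro: sym_subalg.add sym_subalg.mult)

lemma univ_coeff_mem_sym_subalg:
  assumes "j < n"
  shows "(univ_coeff n j :: 'k::comm_ring_1 mpoly) \<in> sym_subalg n"
proof -
  interpret subring "sym_subalg n :: 'k mpoly set" by (rule subring_sym_subalg)
  show ?thesis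
    using assms unfolding univ_coeff_def
    by (intro mult_mem power_mem uminus_mem one_mem sym_subalg.gen) auto
qed

lemma subring_hom_sym_subalg:
  assumes "ring_hom_on phi" and "kalg_hom_sym n phi psi"
  shows "subring_hom (sym_subalg n) psi"
proof (intro subring_hom.intro subring_sym_subalg subring_hom_axioms.intro)
  show "psi 1 = 1"
    using assms unfolding ring_hom_on_def kalg_hom_sym_def by (metis mconst_1)
qed (use assms in \<open>auto simp: kalg_hom_sym_def\<close>)

lemma Fpsi_eq_monic_poly:
  fixes psi :: "'k::field mpoly \<Rightarrow> 'b::comm_ring_1"
  assumes "ring_hom_on phi" and "kalg_hom_sym n phi psi"
  shows "Fpsi n psi = monic_poly (\<lambda>j. psi (univ_coeff n j)) n"
proof -
  interpret subring_hom "sym_subalg n" psi by (rule subring_hom_sym_subalg[OF assms])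
  have "(\<Sum>i = 1..n. monom ((-1) ^ i * psi (esym n i)) (n - i)) =
      (\<Sum>j<n. monom (psi (univ_coeff n j)) j)"
  proof (rule sum.reindex_bij_witness[where i="\<lambda>j. n - j" and j="\<lambda>k. n - k"])
    fix k assume k: "k \<in> {1..n}"
    have esym: "esym n k \<in> sym_subalg n" using k by (intro sym_subalg.gen) auto
    have minus_one: "(-1 :: 'k mpoly) \<in> sym_subalg n" and "psi (-1) = -1"
      using uminus_mem[OF one_mem] hom_uminus[OF one_mem] hom_one by simp_all
    then have "psi (univ_coeff n (n - k)) = (-1) ^ k * psi (esym n k)"
      using k unfolding univ_coeff_def
      by (simp add: hom_mult[OF power_mem[OF minus_one] esym] hom_power)
    then show "monom (psi (univ_coeff n (n - k))) (n - k) =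
        monom ((-1) ^ k * psi (esym n k)) (n - k)"
      by simp
  qed auto
  then show ?thesis unfolding Fpsi_def monic_poly_def by simp
qed

lemma unit_mod_Fpsi_SA:
  fixes psi :: "'k::field mpoly \<Rightarrow> 'b::comm_ring_1"
  assumes n: "n \<ge> 1" and phi: "ring_hom_on phi" and psi: "kalg_hom_sym n phi psi"
    and U: "\<forall>u\<in>Uset n. psi u dvd 1" and g: "g \<in> SA phi"
  shows "unit_mod (Fpsi n psi) g"
proof -
  interpret subring_hom "sym_subalg n" psi by (rule subring_hom_sym_subalg[OF phi psi])
  obtain g0 where g0: "g = map_poly phi g0" "poly g0 0 \<noteq> 0" using g unfolding SA_def by blast
  let ?cs = "map mconst (coeffs g0)" and ?C = "companion_mat (univ_coeff n) n :: 'k mpoly mat"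
  have C: "elements_mat ?C \<subseteq> sym_subalg n"
    by (rule companion_mat_mem[OF univ_coeff_mem_sym_subalg])
  have cs: "set ?cs \<subseteq> sym_subalg n" by (auto intro: sym_subalg.const)
  have map_C: "map_mat psi ?C = companion_mat (\<lambda>j. psi (univ_coeff n j)) n"
    by (rule map_mat_companion_mat[OF univ_coeff_mem_sym_subalg])
  have map_cs: "map psi ?cs = map phi (coeffs g0)"
    using psi by (simp add: kalg_hom_sym_def)
  have "det (horner_mat n ?C ?cs) = (\<Prod>i<n. eval_at_var g0 i)"
    unfolding eval_at_var_def map_poly_def
    by (rule det_horner_companion_mat[OF poly_monic_poly_univ_coeff_mvar
          inj_on_subset[OF inj_mvar]]) auto
  then have "psi (det (horner_mat n ?C ?cs)) dvd 1"
    using U g0(2) unfolding Uset_def by auto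
  moreover have "psi (det (horner_mat n ?C ?cs)) = det (map_mat psi (horner_mat n ?C ?cs))"
    by (rule hom_det[OF horner_mat_carrier[OF companion_mat_carrier]
          horner_mat_mem[OF companion_mat_carrier C cs]])
  ultimately have "det (map_mat psi (horner_mat n ?C ?cs)) dvd 1" by simp
  then have
    "det (horner_mat n (companion_mat (\<lambda>j. psi (univ_coeff n j)) n) (map phi (coeffs g0))) dvd 1"
    unfolding map_mat_horner_mat[OF companion_mat_carrier C cs] map_C map_cs .
  then show ?thesis
    unfolding Fpsi_eq_monic_poly[OF phi psi] g0(1) map_poly_def
    by (rule unit_mod_if_det_horner_mat_unit[OF n])
qed

lemma one_mem_SA: "ring_hom_on phi \<Longrightarrow> 1 \<in> SA phi"
  unfolding SA_def ring_hom_on_def by (auto intro!: exI[of _ 1] simp: map_poly_def)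

theorem proposition4p2:
  fixes phi :: "'k::field \<Rightarrow> 'b::comm_ring_1"
    and psi :: "'k mpoly \<Rightarrow> 'b"
    and n :: nat
  assumes "n \<ge> 1"
    and "ring_hom_on phi"
    and "kalg_hom_sym n phi psi"
    and "\<forall>u\<in>Uset n. psi u dvd 1"
  shows "(\<forall>p. \<forall>g\<in>SA phi. \<exists>a :: nat \<Rightarrow> 'b.
            loc_quot_eq (SA phi) (Fpsi n psi) (p, g) (\<Sum>i<n. monom (a i) i, 1))
       \<and> (\<forall>a :: nat \<Rightarrow> 'b.
            loc_quot_eq (SA phi) (Fpsi n psi) (\<Sum>i<n. monom (a i) i, 1) (0, 1)
              \<longrightarrow> (\<forall>i<n. a i = 0))"
proof -
  have F: "Fpsi n psi = monic_poly (\<lambda>j. psi (univ_coeff n j)) n"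
    by (rule Fpsi_eq_monic_poly[OF assms(2,3)])
  have units: "\<forall>g\<in>SA phi. unit_mod (monic_poly (\<lambda>j. psi (univ_coeff n j)) n) g"
    using unit_mod_Fpsi_SA[OF assms] unfolding F by blast
  have one: "1 \<in> SA phi" by (rule one_mem_SA[OF assms(2)])
  show ?thesis
    unfolding F using loc_quot_eq_reduce[OF one] loc_quot_eq_zero_coeffs[OF units] units by blast
qed

end
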